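(* (Model A) Let $d\ge 3$ and assume $\mathbb{E}(\xi(0))\neq 0$. Then there exists no shift-covariant random gradient Gibbs measure $\xi\mapsto\mu[\xi]$ with $\mathbb{E}\big|\int\mu[\xi](\mathrm{d}\eta)\,V'(\eta(b))\big|<\infty$ for all bonds $b\in(\mathbb{Z}^d)^*$.
   Context: Model A: $V\in C^2(\mathbb{R})$ is even, with $V(s)\ge As^2-B$ for all $s$ (some $A>0$, $B\in\mathbb{R}$) and $V''(s)\le C_2$ (some $C_2>0$). The disorder $(\xi(x))_{x\in\mathbb{Z}^d}$ is an i.i.d. family of real random variables with finite nonzero second moment, on a probability space with law $\mathbb P$, expectation $\mathbb E$. For finite $\Lambda\subset\mathbb{Z}^d$, $\partial\Lambda=\{x\notin\Lambda:\|x-y\|_1=1\text{ for some }y\in\Lambda\}$; for boundary condition $\psi\in\mathbb{R}^{\mathbb{Z}^d}$, $$H^\psi_\Lambda[\xi](\phi)=\tfrac12\sum_{x,y\in\Lambda,|x-y|=1}V(\phi(x)-\phi(y))+\sum_{x\in\Lambda,y\in\partial\Lambda,|x-y|=1}V(\phi(x)-\psi(y))+\tfrac12\sum_{x\in\Lambda}\xi(x)\phi(x)$$ (sums over ordered nearest-neighbour pairs), and $\nu^\psi_\Lambda[\xi](\mathrm{d}\phi)=\frac1{Z}e^{-H^\psi_\Lambda[\xi](\phi)}\prod_{x\in\Lambda}\mathrm{d}\phi(x)\prod_{x\notin\Lambda}\delta_{\psi(x)}(\mathrm{d}\phi(x))$. $(\mathbb{Z}^d)^*$ is the set of directed nearest-neighbour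 bonds $b=(x_b,y_b)$, $\nabla\phi(b)=\phi(y_b)-\phi(x_b)$, $\chi$ the set of $\eta\in\mathbb{R}^{(\mathbb{Z}^d)^*}$ satisfying $\eta(-b)=-\eta(b)$ and summing to zero around every plaquette (the gradient fields). $C_b(\chi)$: bounded functions continuous in each bond coordinate. $\mu^\rho_\Lambda[\xi]$ ($\rho\in\chi$) is the image of $\nu^\psi_\Lambda[\xi]$ under $\phi\mapsto\nabla\phi$ for any $\psi$ with $\nabla\psi=\rho$. A gradient Gibbs measure is a probability measure $\mu$ on $\chi$ with $\int\mu(\mathrm{d}\rho)\int\mu^\rho_\Lambda[\xi](\mathrm{d}\eta)F(\eta)=\int\mu(\mathrm{d}\eta)F(\eta)$ for all finite $\Lambda$ and $F\in C_b(\chi)$. With $(\tau_v\eta)(b)=\eta(b-v)$ and $(\tau_v\xi)(y)=\xi(y-v)$, a shift-covariant random gradient Gibbs measure is a measurable map $\xi\mapsto\mu[\xi]$ with $\mu[\xi]$ a gradient Gibbs measure for $\mathbb P$-a.e. $\xi$ and $\int\mu[\tau_v\xi](\mathrm{d}\eta)F(\eta)=\int\mu[\xi](\mathrm{d}\eta)F(\tau_v\eta)$ for all $v\in\mathbb{Z}^d$, $F\in C_b(\chi)$. *)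

theory Defs
  imports "HOL-Probability.Probability"
begin

text \<open>Lattice sites of Z^d are functions 'd => int for a finite index type 'd (d = CARD('d)).
  Directed nearest-neighbour bonds are pairs of sites at l1-distance 1.\<close>

type_synonym 'd site = "'d \<Rightarrow> int"
type_synonym 'd bond = "'d site \<times> 'd site"

definition vadd :: "'d site \<Rightarrow> 'd site \<Rightarrow> 'd site" where
  "vadd x v = (\<lambda>k. x k + v k)"

definition vsub :: "'d site \<Rightarrow> 'd site \<Rightarrow> 'd site" where
  "vsub x v = (\<lambda>k. x k - v k)"

definition unitv :: "'d \<Rightarrow> 'd site" where
  "unitv i = (\<lambda>k. if k = i then 1 else 0)"

definition adj :: "('d::finite) site \<Rightarrow> 'd site \<Rightarrow> bool" where
  "adj x y \<longleftrightarrow> (\<Sum>i\<in>UNIV. \<bar>x i - y i\<bar>) = 1"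

definition bonds :: "('d::finite) bond set" where
  "bonds = {(x, y). adj x y}"

definition boundary :: "('d::finite) site set \<Rightarrow> 'd site set" where
  "boundary \<Lambda> = {x. x \<notin> \<Lambda> \<and> (\<exists>y\<in>\<Lambda>. adj x y)}"

definition grad :: "(('d::finite) site \<Rightarrow> real) \<Rightarrow> ('d bond \<Rightarrow> real)" where
  "grad \<phi> = restrict (\<lambda>b. \<phi> (snd b) - \<phi> (fst b)) bonds"

definition chi :: "(('d::finite) bond \<Rightarrow> real) set" where
  "chi = {\<eta> \<in> PiE bonds (\<lambda>_. UNIV).
     (\<forall>b\<in>bonds. \<eta> (snd b, fst b) = - \<eta> b) \<and>
     (\<forall>x i j. i \<noteq> j \<longrightarrow>
        \<eta> (x, vadd x (unitv i)) + \<eta> (vadd x (unitv i), vadd (vadd x (unitv i)) (unitv j))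
        + \<eta> (vadd (vadd x (unitv i)) (unitv j), vadd x (unitv j)) + \<eta> (vadd x (unitv j), x) = 0)}"

definition chi_M :: "(('d::finite) bond \<Rightarrow> real) measure" where
  "chi_M = restrict_space (PiM bonds (\<lambda>_. borel)) chi"

definition psi_of :: "(('d::finite) bond \<Rightarrow> real) \<Rightarrow> ('d site \<Rightarrow> real)" where
  "psi_of \<rho> = (SOME \<psi>. grad \<psi> = \<rho> \<and> \<psi> (\<lambda>_. 0) = 0)"

definition ext_cfg :: "'d site set \<Rightarrow> ('d site \<Rightarrow> real) \<Rightarrow> ('d site \<Rightarrow> real) \<Rightarrow> ('d site \<Rightarrow> real)" where
  "ext_cfg \<Lambda> \<phi> \<psi> = (\<lambda>x. if x \<in> \<Lambda> then \<phi> x else \<psi> x)"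

text \<open>Hamiltonian H^psi_Lambda[xi](phi) (sums over ordered nearest-neighbour pairs).\<close>
definition Ham :: "(real \<Rightarrow> real) \<Rightarrow> (('d::finite) site \<Rightarrow> real) \<Rightarrow> 'd site set
    \<Rightarrow> ('d site \<Rightarrow> real) \<Rightarrow> ('d site \<Rightarrow> real) \<Rightarrow> real" where
  "Ham V \<xi> \<Lambda> \<psi> \<phi> =
     (1/2) * (\<Sum>(x, y)\<in>{(x, y). x \<in> \<Lambda> \<and> y \<in> \<Lambda> \<and> adj x y}. V (\<phi> x - \<phi> y))
   + (\<Sum>(x, y)\<in>{(x, y). x \<in> \<Lambda> \<and> y \<in> boundary \<Lambda> \<and> adj x y}. V (\<phi> x - \<psi> y))
   + (1/2) * (\<Sum>x\<in>\<Lambda>. \<xi> x * \<phi> x)"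

text \<open>Finite-volume Gibbs measure nu^psi_Lambda[xi], as a measure on the coordinates in Lambda
  (outside Lambda the configuration equals psi).\<close>
definition partition_fn :: "(real \<Rightarrow> real) \<Rightarrow> (('d::finite) site \<Rightarrow> real) \<Rightarrow> 'd site set
    \<Rightarrow> ('d site \<Rightarrow> real) \<Rightarrow> real" where
  "partition_fn V \<xi> \<Lambda> \<psi> = (\<integral>\<phi>. exp (- Ham V \<xi> \<Lambda> \<psi> \<phi>) \<partial>(PiM \<Lambda> (\<lambda>_. lborel)))"

definition nu_fin :: "(real \<Rightarrow> real) \<Rightarrow> (('d::finite) site \<Rightarrow> real) \<Rightarrow> 'd site set
    \<Rightarrow> ('d site \<Rightarrow> real) \<Rightarrow> ('d site \<Rightarrow> real) measure" where
  "nu_fin V \<xi> \<Lambda> \<psi> = density (PiM \<Lambda> (\<lambda>_. lborel))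
      (\<lambda>\<phi>. ennreal (exp (- Ham V \<xi> \<Lambda> \<psi> \<phi>) / partition_fn V \<xi> \<Lambda> \<psi>))"

definition mu_fin :: "(real \<Rightarrow> real) \<Rightarrow> (('d::finite) site \<Rightarrow> real) \<Rightarrow> 'd site set
    \<Rightarrow> ('d bond \<Rightarrow> real) \<Rightarrow> ('d bond \<Rightarrow> real) measure" where
  "mu_fin V \<xi> \<Lambda> \<rho> = distr (nu_fin V \<xi> \<Lambda> (psi_of \<rho>)) chi_M
      (\<lambda>\<phi>. grad (ext_cfg \<Lambda> \<phi> (psi_of \<rho>)))"

definition Cb :: "((('d::finite) bond \<Rightarrow> real) \<Rightarrow> real) set" where
  "Cb = {F. F \<in> borel_measurable chi_M \<and> continuous_on chi F \<and> bounded (F ` chi)}"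

definition gradient_Gibbs :: "(real \<Rightarrow> real) \<Rightarrow> (('d::finite) site \<Rightarrow> real)
    \<Rightarrow> ('d bond \<Rightarrow> real) measure \<Rightarrow> bool" where
  "gradient_Gibbs V \<xi> \<mu> \<longleftrightarrow> prob_space \<mu> \<and> sets \<mu> = sets chi_M \<and>
     (\<forall>\<Lambda>. finite \<Lambda> \<longrightarrow> (\<forall>F\<in>Cb.
        (\<integral>\<rho>. (\<integral>\<eta>. F \<eta> \<partial>mu_fin V \<xi> \<Lambda> \<rho>) \<partial>\<mu>) = (\<integral>\<eta>. F \<eta> \<partial>\<mu>)))"

definition shift_grad :: "('d::finite) site \<Rightarrow> ('d bond \<Rightarrow> real) \<Rightarrow> ('d bond \<Rightarrow> real)" where
  "shift_grad v \<eta> = restrict (\<lambda>b. \<eta> (vsub (fst b) v, vsub (snd b) v)) bonds"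

definition shift_dis :: "'d site \<Rightarrow> ('d site \<Rightarrow> real) \<Rightarrow> ('d site \<Rightarrow> real)" where
  "shift_dis v \<xi> = (\<lambda>y. \<xi> (vsub y v))"

definition disorder :: "real measure \<Rightarrow> (('d::finite) site \<Rightarrow> real) measure" where
  "disorder D = PiM UNIV (\<lambda>_. D)"

definition shift_cov_random_GGM :: "(real \<Rightarrow> real) \<Rightarrow> real measure
    \<Rightarrow> ((('d::finite) site \<Rightarrow> real) \<Rightarrow> ('d bond \<Rightarrow> real) measure) \<Rightarrow> bool" where
  "shift_cov_random_GGM V D \<mu> \<longleftrightarrow>
     \<mu> \<in> measurable (disorder D) (prob_algebra chi_M) \<and>
     (AE \<xi> in disorder D. gradient_Gibbs V \<xi> (\<mu> \<xi>)) \<and>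
     (\<forall>\<xi>\<in>space (disorder D). \<forall>v. \<forall>F\<in>Cb.
        (\<integral>\<eta>. F \<eta> \<partial>\<mu> (shift_dis v \<xi>)) = (\<integral>\<eta>. F (shift_grad v \<eta>) \<partial>\<mu> \<xi>))"

end

theory Submission
  imports Defs
begin

text \<open>Test the DLR equation at the single site \<open>0\<close> against the total force
  \<open>\<Sum>\<^sub>y V'(\<eta>(0,y))\<close> on the origin, \<open>y\<close> ranging over the neighbours of \<open>0\<close>.
  Conditionally on the neighbouring heights the height at \<open>0\<close> has density proportional to
  \<open>exp(-\<Sum>\<^sub>y V(t - \<psi>(y)) - \<xi>(0) t/2)\<close>, and integrating by parts in \<open>t\<close> shows that the
  force has conditional mean \<open>\<xi>(0)/2\<close>.  Hence, for almost every \<open>\<xi>\<close>, the mean forces on the bonds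
  at the origin add up to \<open>\<xi>(0)/2\<close>, and averaging over the disorder they add up to \<open>\<bbbE>\<xi>(0)/2 \<noteq> 0\<close>.
  On the other hand, shift covariance, the antisymmetry of gradient fields and the oddness of \<open>V'\<close>
  show that the averaged force on the bond \<open>(0,y)\<close> is minus the averaged force on \<open>(0,-y)\<close>, so the
  sum vanishes.\<close>

section \<open>Gaussian tails\<close>

lemma integrable_one_plus_square_gaussian:
  fixes a :: real
  assumes "0 < a"
  shows "integrable lborel (\<lambda>t. (1 + t^2) * exp (- a * t^2))"
proof -
  define \<sigma> where "\<sigma> = sqrt (1 / (2 * a))"
  have "0 < \<sigma>" and \<sigma>2: "2 * \<sigma>^2 = 1 / a"
    using assms by (simp_all add: \<sigma>_def)
  define k where "k = 1 / sqrt (2 * pi * \<sigma>^2)"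
  have "0 < k"
    using \<open>0 < \<sigma>\<close> by (simp add: k_def)
  have density: "normal_density 0 \<sigma> t = k * exp (- a * t^2)" for t
    using assms by (simp add: normal_density_def k_def \<sigma>2)
  have "integrable lborel (\<lambda>t. (normal_density 0 \<sigma> t * (t - 0)^0 + normal_density 0 \<sigma> t * (t - 0)^2) / k)"
    using \<open>0 < \<sigma>\<close> by (intro integrable_divide_zero Bochner_Integration.integrable_add integrable_normal_moment)
  moreover have "(normal_density 0 \<sigma> t * (t - 0)^0 + normal_density 0 \<sigma> t * (t - 0)^2) / k
      = (1 + t^2) * exp (- a * t^2)" for t
    using \<open>0 < k\<close> by (simp add: density field_simps)
  ultimately show ?thesis
    by simp
qed

lemma tendsto_exp_neg_at_infinity:
  fixes f :: "real \<Rightarrow> real"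
  assumes "0 < a" and "\<And>t. a * t^2 - K \<le> f t"
  shows "((\<lambda>t. exp (- f t)) \<longlongrightarrow> 0) at_infinity"
proof -
  have "filterlim (\<lambda>t::real. norm t) at_top at_infinity"
    by (rule filterlim_norm_at_top)
  then have "filterlim (\<lambda>t::real. t^2) at_top at_infinity"
    using filterlim_at_top_mult_at_top by (fastforce simp: power2_eq_square)
  then have "filterlim (\<lambda>t::real. - K + a * t^2) at_top at_infinity"
    by (intro filterlim_tendsto_add_at_top[OF tendsto_const]
        filterlim_tendsto_pos_mult_at_top[OF tendsto_const assms(1)])
  then have "filterlim f at_top at_infinity"
    by (rule filterlim_at_top_mono) (use assms(2) in auto)
  then show ?thesis
    using filterlim_compose[OF exp_at_bot] by (simp add: filterlim_uminus_at_top)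
qed

section \<open>Truncation and monotone limits\<close>

definition cutoff :: "real \<Rightarrow> real \<Rightarrow> real" where
  "cutoff N x = max (- N) (min N x)"

lemma continuous_on_cutoff: "continuous_on UNIV (cutoff N)"
  unfolding cutoff_def by (intro continuous_intros)

lemma cutoff_measurable[measurable]: "cutoff N \<in> borel_measurable borel"
  by (rule borel_measurable_continuous_onI[OF continuous_on_cutoff])

lemma abs_cutoff_le: "0 \<le> N \<Longrightarrow> \<bar>cutoff N x\<bar> \<le> N"
  by (simp add: cutoff_def)

lemma abs_cutoff_le_abs: "0 \<le> N \<Longrightarrow> \<bar>cutoff N x\<bar> \<le> \<bar>x\<bar>"
  by (simp add: cutoff_def)

lemma tendsto_cutoff: "(\<lambda>n. cutoff (real n) x) \<longlonglongrightarrow> x"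
proof (rule tendsto_eventually)
  obtain N :: nat where "\<bar>x\<bar> \<le> real N"
    using real_arch_simple by blast
  then show "\<forall>\<^sub>F n in sequentially. cutoff (real n) x = x"
    unfolding eventually_sequentially by (intro exI[of _ N]) (auto simp: cutoff_def)
qed

lemma cutoff_nonneg: "0 \<le> N \<Longrightarrow> 0 \<le> x \<Longrightarrow> 0 \<le> cutoff N x"
  by (simp add: cutoff_def)

lemma cutoff_mono: "0 \<le> M \<Longrightarrow> M \<le> N \<Longrightarrow> 0 \<le> x \<Longrightarrow> cutoff M x \<le> cutoff N x"
  by (simp add: cutoff_def)

lemma integrable_cutoff: "0 \<le> N \<Longrightarrow> integrable M f \<Longrightarrow> integrable M (\<lambda>x. cutoff N (f x))"
  for f :: "'a \<Rightarrow> real"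
  by (rule Bochner_Integration.integrable_bound[where f=f])
    (auto simp: borel_measurable_integrable abs_cutoff_le_abs)

lemma tendsto_integral_cutoff:
  fixes f :: "'a \<Rightarrow> real"
  assumes "integrable M f"
  shows "(\<lambda>n. \<integral>x. cutoff (real n) (f x) \<partial>M) \<longlonglongrightarrow> integral\<^sup>L M f"
  using assms
  by (intro integral_dominated_convergence[where w="\<lambda>x. \<bar>f x\<bar>"])
    (auto simp: borel_measurable_integrable abs_cutoff_le_abs tendsto_cutoff)

lemma integral_eq_if_integral_cutoff_eq:
  fixes f g :: "'a \<Rightarrow> real"
  assumes "integrable M f" and "integrable N g"
    and "\<And>n. (\<integral>x. cutoff (real n) (f x) \<partial>M) = (\<integral>x. cutoff (real n) (g x) \<partial>N)"
  shows "integral\<^sup>L M f = integral\<^sup>L N g"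
  using tendsto_integral_cutoff[OF assms(1)] tendsto_integral_cutoff[OF assms(2)]
  unfolding assms(3) by (rule LIMSEQ_unique)

text \<open>No measurability of \<open>\<rho> \<mapsto> k \<rho>\<close> is assumed: measurability of the limit in \<open>\<rho>\<close> comes
  from the integrability of the truncated inner integrals.\<close>

lemma kernel_identity_monotone_limit:
  fixes \<mu> :: "'a measure" and k :: "'a \<Rightarrow> 'a measure" and P :: "'a \<Rightarrow> real"
  assumes P: "\<And>\<eta>. 0 \<le> P \<eta>" "integrable \<mu> P" "\<And>\<rho>. integrable (k \<rho>) P"
    and trunc_integrable: "\<And>n. integrable \<mu> (\<lambda>\<rho>. \<integral>\<eta>. cutoff (real n) (P \<eta>) \<partial>k \<rho>)"
    and trunc_identity: "\<And>n. (\<integral>\<rho>. (\<integral>\<eta>. cutoff (real n) (P \<eta>) \<partial>k \<rho>) \<partial>\<mu>)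
      = (\<integral>\<eta>. cutoff (real n) (P \<eta>) \<partial>\<mu>)"
  shows "integrable \<mu> (\<lambda>\<rho>. \<integral>\<eta>. P \<eta> \<partial>k \<rho>)"
    and "(\<integral>\<rho>. (\<integral>\<eta>. P \<eta> \<partial>k \<rho>) \<partial>\<mu>) = (\<integral>\<eta>. P \<eta> \<partial>\<mu>)"
proof -
  define q where "q n \<rho> = (\<integral>\<eta>. cutoff (real n) (P \<eta>) \<partial>k \<rho>)" for n \<rho>
  have "q m \<rho> \<le> q n \<rho>" if "m \<le> n" for m n \<rho>
    unfolding q_def
    by (rule integral_mono[OF integrable_cutoff[OF _ P(3)] integrable_cutoff[OF _ P(3)]])
      (simp_all add: cutoff_mono P(1) that)
  then have mono: "mono (\<lambda>n. q n \<rho>)" for \<rho>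
    by (rule monoI)
  have nonneg: "0 \<le> q n \<rho>" for n \<rho>
    unfolding q_def by (intro Bochner_Integration.integral_nonneg cutoff_nonneg P(1)) simp
  have inner_lim: "(\<lambda>n. q n \<rho>) \<longlonglongrightarrow> (\<integral>\<eta>. P \<eta> \<partial>k \<rho>)" for \<rho>
    unfolding q_def by (rule tendsto_integral_cutoff[OF P(3)])
  have outer_lim: "(\<lambda>n. \<integral>\<rho>. q n \<rho> \<partial>\<mu>) \<longlonglongrightarrow> (\<integral>\<eta>. P \<eta> \<partial>\<mu>)"
    unfolding q_def trunc_identity by (rule tendsto_integral_cutoff[OF P(2)])
  have q_integrable: "integrable \<mu> (q n)" for n
    using trunc_integrable[of n] by (simp add: q_def[abs_def])
  have "(\<lambda>\<rho>. \<integral>\<eta>. P \<eta> \<partial>k \<rho>) \<in> borel_measurable \<mu>"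
    using inner_lim q_integrable by (rule borel_measurable_LIMSEQ_real[OF _ borel_measurable_integrable])
  from integral_monotone_convergence_nonneg[OF q_integrable AE_I2[OF mono] AE_I2[OF nonneg]
      AE_I2[OF inner_lim] outer_lim this]
  show "integrable \<mu> (\<lambda>\<rho>. \<integral>\<eta>. P \<eta> \<partial>k \<rho>)"
    and "(\<integral>\<rho>. (\<integral>\<eta>. P \<eta> \<partial>k \<rho>) \<partial>\<mu>) = (\<integral>\<eta>. P \<eta> \<partial>\<mu>)" .
qed

lemma sum_eq_zero_if_odd:
  fixes f :: "'a \<Rightarrow> real"
  assumes "bij_betw g S S" and "\<And>y. y \<in> S \<Longrightarrow> f (g y) = - f y"
  shows "sum f S = 0"
proof -
  have "sum f S = sum (f \<circ> g) S"
    using sum.reindex_bij_betw[OF assms(1), of f] by simp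
  also have "\<dots> = - sum f S"
    using assms(2) by (simp add: sum_negf)
  finally show ?thesis
    by simp
qed

section \<open>The one-dimensional single-site measure\<close>

locale potential =
  fixes V V' V'' :: "real \<Rightarrow> real" and A B C2 :: real
  assumes V_even: "\<And>s. V (- s) = V s"
    and V_deriv: "\<And>s. (V has_real_derivative V' s) (at s)"
    and V'_deriv: "\<And>s. (V' has_real_derivative V'' s) (at s)"
    and A_pos: "A > 0"
    and V_ge_quadratic: "\<And>s. A * s^2 - B \<le> V s"
    and V''_le: "\<And>s. V'' s \<le> C2"
    and C2_pos: "C2 > 0"
begin

lemma V'_minus: "V' (- s) = - V' s"
proof -
  have "((\<lambda>s. V (- s)) has_real_derivative - V' (- s)) (at s)"
    using DERIV_chain2[OF V_deriv DERIV_minus[OF DERIV_ident]] by simp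
  then have "(V has_real_derivative - V' (- s)) (at s)"
    by (simp add: V_even)
  then show ?thesis
    using DERIV_unique[OF V_deriv] by fastforce
qed

lemma V'_zero: "V' 0 = 0"
  using V'_minus[of 0] by simp

lemma V'_diff_swap: "V' (a - b) = - V' (b - a)"
  using V'_minus[of "b - a"] by simp

lemma isCont_V': "isCont V' s"
  using V'_deriv DERIV_isCont by blast

lemma continuous_on_V: "continuous_on UNIV V"
  using V_deriv DERIV_isCont continuous_at_imp_continuous_on by blast

lemma continuous_on_V': "continuous_on UNIV V'"
  using isCont_V' continuous_at_imp_continuous_on by blast

lemma V_measurable[measurable]: "V \<in> borel_measurable borel"
  by (rule borel_measurable_continuous_onI[OF continuous_on_V])

lemma V'_measurable[measurable]: "V' \<in> borel_measurable borel"
  by (rule borel_measurable_continuous_onI[OF continuous_on_V'])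

lemma V_le_taylor: "V (s + u) \<le> V s + V' s * u + C2 / 2 * u^2"
proof -
  define diff :: "nat \<Rightarrow> real \<Rightarrow> real" where
    "diff m = (if m = 0 then (\<lambda>u. V (s + u)) else if m = 1 then (\<lambda>u. V' (s + u)) else (\<lambda>u. V'' (s + u)))" for m
  have "((\<lambda>u. V (s + u)) has_real_derivative V' (s + t)) (at t)"
    and "((\<lambda>u. V' (s + u)) has_real_derivative V'' (s + t)) (at t)" for t
    using DERIV_chain2[OF V_deriv DERIV_add[OF DERIV_const DERIV_ident]]
      DERIV_chain2[OF V'_deriv DERIV_add[OF DERIV_const DERIV_ident]] by simp_all
  then have "\<forall>m t. m < 2 \<and> \<bar>t\<bar> \<le> \<bar>u\<bar> \<longrightarrow> (diff m has_real_derivative diff (Suc m) t) (at t)"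
    by (auto simp: diff_def less_2_cases_iff)
  then obtain t where "V (s + u) = V s + V' s * u + V'' (s + t) / 2 * u^2"
    using Maclaurin_bi_le[of diff "\<lambda>u. V (s + u)" 2 u]
    by (auto simp: diff_def eval_nat_numeral)
  moreover have "V'' (s + t) / 2 * u^2 \<le> C2 / 2 * u^2"
    using V''_le by (intro mult_right_mono divide_right_mono) auto
  ultimately show ?thesis by linarith
qed

lemma V_bounded_below: "- \<bar>B\<bar> \<le> V s"
proof -
  have "0 \<le> A * s^2"
    using A_pos by simp
  then show ?thesis
    using V_ge_quadratic[of s] abs_ge_self[of B] by linarith
qed

lemma abs_V'_le: "\<bar>V' s\<bar> \<le> (\<bar>V 0\<bar> + \<bar>B\<bar> + C2) * (1 + s^2)"
proof -
  have "V (s + 1) \<le> V s + V' s + C2 / 2" "V (s + - 1) \<le> V s - V' s + C2 / 2"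
    using V_le_taylor[of s 1] V_le_taylor[of s "- 1"] by simp_all
  moreover have "V s \<le> V 0 + C2 / 2 * s^2"
    using V_le_taylor[of 0 s] by (simp add: V'_zero)
  ultimately have "\<bar>V' s\<bar> \<le> \<bar>V 0\<bar> + \<bar>B\<bar> + C2 / 2 + C2 / 2 * s^2"
    using V_bounded_below[of "s + 1"] V_bounded_below[of "s + - 1"] by (auto simp: abs_le_iff)
  moreover have "0 \<le> C2 * s^2" "0 \<le> \<bar>B\<bar> * s^2" "0 \<le> \<bar>V 0\<bar> * s^2"
    using C2_pos by simp_all
  moreover have "(\<bar>V 0\<bar> + \<bar>B\<bar> + C2) * (1 + s^2)
      = \<bar>V 0\<bar> + \<bar>B\<bar> + C2 + \<bar>V 0\<bar> * s^2 + \<bar>B\<bar> * s^2 + C2 * s^2"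
    by (simp add: algebra_simps)
  ultimately show ?thesis
    using C2_pos by linarith
qed

definition single_energy :: "'a set \<Rightarrow> ('a \<Rightarrow> real) \<Rightarrow> real \<Rightarrow> real \<Rightarrow> real" where
  "single_energy S p c t = (\<Sum>y\<in>S. V (t - p y)) + c * t"

definition single_force :: "'a set \<Rightarrow> ('a \<Rightarrow> real) \<Rightarrow> real \<Rightarrow> real" where
  "single_force S p t = (\<Sum>y\<in>S. V' (p y - t))"

lemma single_energy_measurable[measurable]: "single_energy S p c \<in> borel_measurable borel"
  unfolding single_energy_def by measurable

lemma single_force_measurable[measurable]: "single_force S p \<in> borel_measurable borel"
  unfolding single_force_def by measurable

lemma single_energy_has_derivative:
  "(single_energy S p c has_real_derivative c - single_force S p t) (at t)"
proof -
  have "(single_energy S p c has_real_derivative (\<Sum>y\<in>S. V' (t - p y)) + c) (at t)"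
    unfolding single_energy_def[abs_def]
    by (auto intro!: derivative_eq_intros DERIV_chain2[OF V_deriv])
  then show ?thesis
    by (simp add: single_force_def sum_negf V'_diff_swap[of t])
qed

lemma continuous_single_force: "isCont (single_force S p) t"
  unfolding single_force_def
  by (intro continuous_intros isCont_o2[OF _ isCont_V'])

lemma single_energy_ge_quadratic:
  assumes "finite S" "y0 \<in> S"
  shows "\<exists>K. \<forall>t. A / 4 * t^2 - K \<le> single_energy S p c t"
proof (intro exI allI)
  fix t
  have "- real (card S) * \<bar>B\<bar> \<le> (\<Sum>y\<in>S - {y0}. V (t - p y))"
  proof -
    have "(\<Sum>y\<in>S - {y0}. - \<bar>B\<bar>) \<le> (\<Sum>y\<in>S - {y0}. V (t - p y))"
      by (intro sum_mono V_bounded_below)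
    moreover have "real (card (S - {y0})) * \<bar>B\<bar> \<le> real (card S) * \<bar>B\<bar>"
      by (intro mult_right_mono) (simp_all add: card_Diff1_le)
    ultimately show ?thesis
      by simp
  qed
  moreover have "A * (t^2 / 2 - (p y0)^2) - \<bar>B\<bar> \<le> V (t - p y0)"
  proof -
    have "t^2 / 2 - (p y0)^2 \<le> (t - p y0)^2"
      using zero_le_power2[of "t - 2 * p y0"] by (simp add: power2_eq_square algebra_simps)
    then have "A * (t^2 / 2 - (p y0)^2) \<le> A * (t - p y0)^2"
      using A_pos by (intro mult_left_mono) simp_all
    then show ?thesis
      using V_ge_quadratic[of "t - p y0"] by linarith
  qed
  moreover have "- A / 4 * t^2 - c^2 / A \<le> c * t"
  proof -
    have "0 \<le> (A * t + 2 * c)^2 / (4 * A)"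
      using A_pos by simp
    also have "\<dots> = A / 4 * t^2 + c * t + c^2 / A"
      using A_pos by (simp add: power2_eq_square field_simps)
    finally show ?thesis by simp
  qed
  moreover have "(\<Sum>y\<in>S. V (t - p y)) = V (t - p y0) + (\<Sum>y\<in>S - {y0}. V (t - p y))"
    using assms by (simp add: sum.remove)
  ultimately show "A / 4 * t^2 - (real (card S) * \<bar>B\<bar> + A * (p y0)^2 + \<bar>B\<bar> + c^2 / A)
      \<le> single_energy S p c t"
    unfolding single_energy_def by (simp add: algebra_simps)
qed

lemma abs_single_force_le_quadratic:
  assumes "finite S"
  shows "\<exists>K\<ge>0. \<forall>t. \<bar>single_force S p t\<bar> \<le> K * (1 + t^2)"
proof (intro exI conjI allI)
  define M where "M = \<bar>V 0\<bar> + \<bar>B\<bar> + C2"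
  have M: "0 \<le> M"
    using C2_pos by (simp add: M_def)
  show "0 \<le> (\<Sum>y\<in>S. 2 * M * (1 + (p y)^2))"
    using M by (intro sum_nonneg) simp
  fix t
  have "\<bar>single_force S p t\<bar> \<le> (\<Sum>y\<in>S. \<bar>V' (p y - t)\<bar>)"
    unfolding single_force_def by (rule sum_abs)
  also have "\<dots> \<le> (\<Sum>y\<in>S. 2 * M * (1 + (p y)^2) * (1 + t^2))"
  proof (rule sum_mono)
    fix y
    have "1 + (p y - t)^2 \<le> 2 * (1 + (p y)^2) * (1 + t^2)"
      using zero_le_power2[of "p y + t"] zero_le_power2[of "p y * t"]
      by (simp add: power2_eq_square algebra_simps)
    then have "M * (1 + (p y - t)^2) \<le> M * (2 * (1 + (p y)^2) * (1 + t^2))"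
      using M by (rule mult_left_mono)
    moreover have "M * (2 * (1 + (p y)^2) * (1 + t^2)) = 2 * M * (1 + (p y)^2) * (1 + t^2)"
      by simp
    ultimately show "\<bar>V' (p y - t)\<bar> \<le> 2 * M * (1 + (p y)^2) * (1 + t^2)"
      using abs_V'_le[of "p y - t", folded M_def] by linarith
  qed
  also have "\<dots> = (\<Sum>y\<in>S. 2 * M * (1 + (p y)^2)) * (1 + t^2)"
    by (simp add: sum_distrib_right)
  finally show "\<bar>single_force S p t\<bar> \<le> (\<Sum>y\<in>S. 2 * M * (1 + (p y)^2)) * (1 + t^2)" .
qed

definition single_density :: "'a set \<Rightarrow> ('a \<Rightarrow> real) \<Rightarrow> real \<Rightarrow> real \<Rightarrow> real" where
  "single_density S p c t
    = exp (- single_energy S p c t) / (\<integral>s. exp (- single_energy S p c s) \<partial>lborel)"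

lemma single_density_measurable[measurable]: "single_density S p c \<in> borel_measurable borel"
  unfolding single_density_def by measurable

context
  fixes S :: "'a set" and p :: "'a \<Rightarrow> real" and c :: real
  assumes S: "finite S" "S \<noteq> {}"
begin

lemma integrable_exp_single_energy:
  assumes [measurable]: "\<Phi> \<in> borel_measurable borel"
    and \<Phi>_le: "\<And>t. \<bar>\<Phi> t\<bar> \<le> 1 + \<bar>single_force S p t\<bar>"
  shows "integrable lborel (\<lambda>t. exp (- single_energy S p c t) * \<Phi> t)"
proof -
  obtain K1 where K1: "\<And>t. A / 4 * t^2 - K1 \<le> single_energy S p c t"
    using single_energy_ge_quadratic[OF S(1)] S(2) by blast
  obtain K2 where "0 \<le> K2" and K2: "\<And>t. \<bar>single_force S p t\<bar> \<le> K2 * (1 + t^2)"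
    using abs_single_force_le_quadratic[OF S(1)] by blast
  show ?thesis
  proof (rule Bochner_Integration.integrable_bound)
    show "integrable lborel (\<lambda>t. exp K1 * (1 + K2) * ((1 + t^2) * exp (- (A / 4) * t^2)))"
      using A_pos by (intro integrable_mult_right integrable_one_plus_square_gaussian) simp
    show "AE t in lborel. norm (exp (- single_energy S p c t) * \<Phi> t)
        \<le> norm (exp K1 * (1 + K2) * ((1 + t^2) * exp (- (A / 4) * t^2)))"
    proof (rule AE_I2)
      fix t
      have "exp (- single_energy S p c t) \<le> exp K1 * exp (- (A / 4) * t^2)"
        using K1[of t] by (simp add: exp_add[symmetric])
      moreover have "\<bar>\<Phi> t\<bar> \<le> (1 + K2) * (1 + t^2)"
      proof -
        have "\<bar>\<Phi> t\<bar> \<le> 1 + K2 * (1 + t^2)"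
          using \<Phi>_le[of t] K2[of t] by linarith
        also have "\<dots> \<le> (1 + K2) * (1 + t^2)"
          by (simp add: algebra_simps)
        finally show ?thesis .
      qed
      ultimately have "exp (- single_energy S p c t) * \<bar>\<Phi> t\<bar>
          \<le> exp K1 * exp (- (A / 4) * t^2) * ((1 + K2) * (1 + t^2))"
        by (intro mult_mono) simp_all
      then show "norm (exp (- single_energy S p c t) * \<Phi> t)
          \<le> norm (exp K1 * (1 + K2) * ((1 + t^2) * exp (- (A / 4) * t^2)))"
        using \<open>0 \<le> K2\<close> by (simp add: abs_mult mult_ac)
    qed
  qed measurable
qed

lemma single_partition_pos: "0 < (\<integral>t. exp (- single_energy S p c t) \<partial>lborel)"
proof -
  have int: "integrable lborel (\<lambda>t. exp (- single_energy S p c t))"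
    using integrable_exp_single_energy[of "\<lambda>_. 1"] by simp
  have "(\<integral>t. exp (- single_energy S p c t) \<partial>lborel) \<noteq> 0"
  proof
    assume "(\<integral>t. exp (- single_energy S p c t) \<partial>lborel) = 0"
    then have "AE (t::real) in lborel. False"
      using integral_nonneg_eq_0_iff_AE[OF int] by simp
    then show False
      by (simp add: eventually_False ae_filter_eq_bot_iff emeasure_lborel_UNIV)
  qed
  moreover have "0 \<le> (\<integral>t. exp (- single_energy S p c t) \<partial>lborel)"
    by (rule Bochner_Integration.integral_nonneg) simp
  ultimately show ?thesis
    by linarith
qed

text \<open>Integration by parts: the boundary terms vanish by the Gaussian decay of the weight.\<close>

lemma integral_exp_single_energy_force:
  "(\<integral>t. exp (- single_energy S p c t) * single_force S p t \<partial>lborel)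
    = c * (\<integral>t. exp (- single_energy S p c t) \<partial>lborel)"
proof -
  let ?w = "\<lambda>t. exp (- single_energy S p c t)"
  define f where "f t = (single_force S p t - c) * ?w t" for t
  have int_w: "integrable lborel ?w"
    using integrable_exp_single_energy[of "\<lambda>_. 1"] by simp
  have int_wF: "integrable lborel (\<lambda>t. ?w t * single_force S p t)"
    by (rule integrable_exp_single_energy) auto
  have "f = (\<lambda>t. ?w t * single_force S p t - c * ?w t)"
    by (simp add: fun_eq_iff f_def algebra_simps)
  then have int_f: "integrable lborel f"
    using int_w int_wF by simp
  obtain K where "\<And>t. A / 4 * t^2 - K \<le> single_energy S p c t"
    using single_energy_ge_quadratic[OF S(1)] S(2) by blast
  then have lim: "(?w \<longlongrightarrow> 0) at_infinity"
    using A_pos by (intro tendsto_exp_neg_at_infinity[of "A / 4"]) auto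
  have "(LBINT t=-\<infinity>..\<infinity>. f t) = 0 - 0"
  proof (rule interval_integral_FTC_integrable)
    fix t
    have "(?w has_real_derivative f t) (at t)"
      using DERIV_fun_exp[OF DERIV_minus[OF single_energy_has_derivative]]
      by (simp add: f_def mult.commute)
    then show "(?w has_vector_derivative f t) (at t)"
      by (simp add: has_real_derivative_iff_has_vector_derivative)
    show "isCont f t"
      unfolding f_def using single_energy_has_derivative[THEN DERIV_isCont]
      by (intro continuous_intros continuous_single_force isCont_o2[where g=exp]) auto
  next
    show "set_integrable lborel (einterval (- \<infinity>) \<infinity>) f"
      using int_f by (simp add: set_integrable_def)
    show "((?w \<circ> real_of_ereal) \<longlongrightarrow> 0) (at_right (- \<infinity>))"
      using filterlim_mono[OF lim order_refl at_bot_le_at_infinity] by (simp add: ereal_tendsto_simps)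
    show "((?w \<circ> real_of_ereal) \<longlongrightarrow> 0) (at_left \<infinity>)"
      using filterlim_mono[OF lim order_refl at_top_le_at_infinity] by (simp add: ereal_tendsto_simps)
  qed simp
  then have "(\<integral>t. ?w t * single_force S p t - c * ?w t \<partial>lborel) = 0"
    by (simp add: interval_lebesgue_integral_def set_lebesgue_integral_def f_def algebra_simps)
  then show ?thesis
    using int_w int_wF by simp
qed

lemma single_density_nonneg: "0 \<le> single_density S p c t"
  using single_partition_pos by (simp add: single_density_def)

lemma integrable_single_density:
  assumes "\<Phi> \<in> borel_measurable borel" and "\<And>t. \<bar>\<Phi> t\<bar> \<le> 1 + \<bar>single_force S p t\<bar>"
  shows "integrable lborel (\<lambda>t. single_density S p c t * \<Phi> t)"
  using integrable_divide_zero[OF integrable_exp_single_energy[OF assms]]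
  by (simp add: single_density_def)

lemma integral_single_density: "(\<integral>t. single_density S p c t \<partial>lborel) = 1"
  using single_partition_pos by (simp add: single_density_def)

lemma integral_single_density_force: "(\<integral>t. single_density S p c t * single_force S p t \<partial>lborel) = c"
  using integral_exp_single_energy_force single_partition_pos by (simp add: single_density_def)

lemma prob_space_density_single_density: "prob_space (density lborel (\<lambda>t. ennreal (single_density S p c t)))"
proof
  have "(\<integral>\<^sup>+t. ennreal (single_density S p c t) \<partial>lborel) = ennreal (\<integral>t. single_density S p c t \<partial>lborel)"
    using integrable_single_density[of "\<lambda>_. 1"]
    by (intro nn_integral_eq_integral) (simp_all add: single_density_nonneg)
  then show "emeasure (density lborel (\<lambda>t. ennreal (single_density S p c t))) (space (density lborel (\<lambda>t. ennreal (single_density S p c t)))) = 1"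
    by (simp add: emeasure_density integral_single_density)
qed

end

end

section \<open>Lattice, gradient fields and disorder\<close>

definition origin :: "'d site" where
  "origin = (\<lambda>_. 0)"

definition origin_nbrs :: "('d::finite) site set" where
  "origin_nbrs = {y. adj origin y}"

definition neg_site :: "'d site \<Rightarrow> 'd site" where
  "neg_site y = (\<lambda>k. - y k)"

lemma adj_sym: "adj x y \<longleftrightarrow> adj y x"
  unfolding adj_def by (simp add: abs_minus_commute)

lemma not_adj_self: "\<not> adj x x"
  unfolding adj_def by simp

lemma adj_vadd_unitv: "adj x (vadd x (unitv i))"
proof -
  have "(\<Sum>k\<in>UNIV. \<bar>x k - vadd x (unitv i) k\<bar>) = (\<Sum>k\<in>UNIV. if k = i then 1 else 0)"
    by (intro sum.cong) (auto simp: vadd_def unitv_def)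
  then show ?thesis
    by (simp add: adj_def)
qed

lemma finite_origin_nbrs: "finite (origin_nbrs :: ('d::finite) site set)"
proof (rule finite_subset)
  show "origin_nbrs \<subseteq> PiE (UNIV :: 'd set) (\<lambda>_. {-1..1})"
  proof
    fix y :: "'d site"
    assume "y \<in> origin_nbrs"
    then have "(\<Sum>i\<in>UNIV. \<bar>y i\<bar>) = 1"
      by (simp add: origin_nbrs_def adj_def origin_def)
    then have "\<bar>y i\<bar> \<le> 1" for i
      using member_le_sum[of i UNIV "\<lambda>i. \<bar>y i\<bar>"] by simp
    then show "y \<in> PiE UNIV (\<lambda>_. {-1..1})"
      by (auto simp: abs_le_iff)
  qed
qed (intro finite_PiE; simp)

lemma origin_nbrs_nonempty: "(origin_nbrs :: ('d::finite) site set) \<noteq> {}"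
  using adj_vadd_unitv[of origin] by (auto simp: origin_nbrs_def vadd_def origin_def)

lemma neg_site_in_origin_nbrs: "y \<in> origin_nbrs \<Longrightarrow> neg_site y \<in> origin_nbrs"
  by (simp add: origin_nbrs_def adj_def origin_def neg_site_def)

lemma neg_site_neg_site[simp]: "neg_site (neg_site y) = y"
  by (simp add: neg_site_def)

lemma bij_betw_neg_site: "bij_betw neg_site origin_nbrs origin_nbrs"
  by (rule bij_betwI[where g=neg_site]) (simp_all add: neg_site_in_origin_nbrs)

lemma origin_bond: "y \<in> origin_nbrs \<Longrightarrow> (origin, y) \<in> bonds"
  by (simp add: origin_nbrs_def bonds_def)

lemma boundary_origin: "boundary {origin} = origin_nbrs"
  by (auto simp: boundary_def origin_nbrs_def adj_sym not_adj_self)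

lemma grad_bond: "(x, y) \<in> bonds \<Longrightarrow> grad \<phi> (x, y) = \<phi> y - \<phi> x"
  by (simp add: grad_def)

lemma grad_in_chi: "grad \<phi> \<in> chi"
proof -
  have "grad \<phi> (x, vadd x (unitv i)) + grad \<phi> (vadd x (unitv i), vadd (vadd x (unitv i)) (unitv j))
      + grad \<phi> (vadd (vadd x (unitv i)) (unitv j), vadd x (unitv j)) + grad \<phi> (vadd x (unitv j), x) = 0"
    for x i j
  proof -
    have "vadd (vadd x (unitv i)) (unitv j) = vadd (vadd x (unitv j)) (unitv i)"
      by (auto simp: vadd_def)
    then have "(vadd (vadd x (unitv i)) (unitv j), vadd x (unitv j)) \<in> bonds"
      by (simp add: bonds_def adj_sym[of _ "vadd x (unitv j)"] adj_vadd_unitv)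
    moreover have "(x, vadd x (unitv i)) \<in> bonds" "(vadd x (unitv j), x) \<in> bonds"
      "(vadd x (unitv i), vadd (vadd x (unitv i)) (unitv j)) \<in> bonds"
      by (simp_all add: bonds_def adj_vadd_unitv adj_sym[of _ x])
    ultimately show ?thesis
      by (simp add: grad_bond)
  qed
  moreover have "\<forall>b\<in>bonds. grad \<phi> (snd b, fst b) = - grad \<phi> b"
    by (auto simp: grad_def bonds_def adj_sym)
  ultimately show ?thesis
    unfolding chi_def by (simp add: grad_def)
qed

lemma measurable_grad:
  assumes "\<And>x. (\<lambda>m. \<Phi> m x) \<in> borel_measurable M"
  shows "(\<lambda>m. grad (\<Phi> m)) \<in> measurable M chi_M"
  unfolding chi_M_def
proof (rule measurable_restrict_space2)
  show "(\<lambda>m. grad (\<Phi> m)) \<in> space M \<rightarrow> chi"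
    using grad_in_chi by blast
  show "(\<lambda>m. grad (\<Phi> m)) \<in> measurable M (Pi\<^sub>M bonds (\<lambda>_. borel))"
    unfolding grad_def using assms by measurable
qed

lemma space_chi_M: "space chi_M = chi"
  by (auto simp: chi_M_def space_restrict_space chi_def space_PiM)

lemma measurable_bond_coordinate: "b \<in> bonds \<Longrightarrow> (\<lambda>\<eta>. \<eta> b) \<in> borel_measurable chi_M"
  unfolding chi_M_def by (intro measurable_restrict_space1 measurable_component_singleton)

lemma chi_antisym: "\<eta> \<in> chi \<Longrightarrow> (x, y) \<in> bonds \<Longrightarrow> \<eta> (y, x) = - \<eta> (x, y)"
  unfolding chi_def by force

lemma distr_PiM_singleton_lborel: "distr (PiM {x} (\<lambda>_. lborel)) lborel (\<lambda>\<phi>. \<phi> x) = lborel"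
  by (rule product_sigma_finite.distr_singleton) (simp add: product_sigma_finite_def sigma_finite_lborel)

lemma integral_PiM_singleton_lborel:
  fixes f :: "real \<Rightarrow> real"
  assumes "f \<in> borel_measurable borel"
  shows "(\<integral>\<phi>. f (\<phi> x) \<partial>PiM {x} (\<lambda>_. lborel)) = (\<integral>t. f t \<partial>lborel)"
  using integral_distr[of "\<lambda>\<phi>. \<phi> x" "PiM {x} (\<lambda>_. lborel)" lborel f] assms
  by (simp add: distr_PiM_singleton_lborel measurable_component_singleton)

definition grad_set_origin :: "(('d::finite) site \<Rightarrow> real) \<Rightarrow> real \<Rightarrow> ('d bond \<Rightarrow> real)" where
  "grad_set_origin \<psi> t = grad (\<lambda>x. if x = origin then t else \<psi> x)"

lemma grad_set_origin_measurable[measurable]: "grad_set_origin \<psi> \<in> measurable borel chi_M"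
  unfolding grad_set_origin_def by (rule measurable_grad) simp

lemma comp_in_Cb:
  fixes H :: "(('d::finite) bond \<Rightarrow> real) \<Rightarrow> real"
  assumes "H \<in> borel_measurable chi_M" "continuous_on UNIV H"
    and "continuous_on UNIV \<Phi>" and "\<And>x. \<bar>\<Phi> x\<bar> \<le> K"
  shows "(\<lambda>\<eta>. \<Phi> (H \<eta>)) \<in> Cb"
  unfolding Cb_def
proof (intro CollectI conjI)
  show "(\<lambda>\<eta>. \<Phi> (H \<eta>)) \<in> borel_measurable chi_M"
    using measurable_compose[OF assms(1) borel_measurable_continuous_onI[OF assms(3)]] .
  show "continuous_on chi (\<lambda>\<eta>. \<Phi> (H \<eta>))"
    using continuous_on_compose2[OF assms(3,2)] continuous_on_subset by blast
  show "bounded ((\<lambda>\<eta>. \<Phi> (H \<eta>)) ` chi)"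
    using assms(4) by (intro boundedI[of _ K]) auto
qed

lemma integrable_bounded_on_chi:
  fixes F :: "(('d::finite) bond \<Rightarrow> real) \<Rightarrow> real"
  assumes "finite_measure M" and "sets M = sets chi_M"
    and "F \<in> borel_measurable chi_M" and "\<And>\<eta>. \<eta> \<in> chi \<Longrightarrow> \<bar>F \<eta>\<bar> \<le> K"
  shows "integrable M F"
proof -
  interpret finite_measure M
    by fact
  show ?thesis
  proof (rule integrable_const_bound)
    show "AE \<eta> in M. norm (F \<eta>) \<le> K"
      using assms(4) sets_eq_imp_space_eq[OF assms(2)] by (intro AE_I2) (simp add: space_chi_M)
    show "F \<in> borel_measurable M"
      using assms(2,3) by (simp cong: measurable_cong_sets)
  qed
qed

lemma integral_disorder_coordinate:
  assumes "prob_space D" "sets D = sets borel"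
  shows "(\<integral>\<xi>. \<xi> x \<partial>disorder D) = (\<integral>t. t \<partial>D)"
proof -
  have "distr (disorder D) D (\<lambda>\<xi>. \<xi> x) = D"
    unfolding disorder_def using assms(1) by (rule distr_PiM_component) simp
  moreover have "(\<lambda>t. t) \<in> borel_measurable D"
    using assms(2) by (simp cong: measurable_cong_sets)
  ultimately show ?thesis
    using integral_distr[of "\<lambda>\<xi>. \<xi> x" "disorder D" D "\<lambda>t. t"]
    by (simp add: disorder_def measurable_component_singleton)
qed

lemma shift_dis_eq_restrict: "shift_dis v = (\<lambda>\<xi>. \<lambda>y\<in>UNIV. \<xi> (vsub y v))"
  by (simp add: fun_eq_iff shift_dis_def)

lemma measurable_shift_dis: "shift_dis v \<in> measurable (disorder D) (disorder D)"
  unfolding shift_dis_eq_restrict disorder_def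
  by (intro measurable_restrict measurable_component_singleton) auto

lemma distr_disorder_shift:
  assumes "prob_space D"
  shows "distr (disorder D) (disorder D) (shift_dis v) = disorder D"
proof -
  have "inj (\<lambda>y. vsub y v)"
    by (auto simp: inj_on_def vsub_def fun_eq_iff)
  then show ?thesis
    using distr_PiM_reindex[of UNIV "\<lambda>_. D" "\<lambda>y. vsub y v" UNIV] assms
    unfolding shift_dis_eq_restrict disorder_def by simp
qed

lemma integral_disorder_shift:
  fixes f :: "(('d::finite) site \<Rightarrow> real) \<Rightarrow> real"
  assumes "prob_space D" and "f \<in> borel_measurable (disorder D)"
  shows "(\<integral>\<xi>. f (shift_dis v \<xi>) \<partial>disorder D) = (\<integral>\<xi>. f \<xi> \<partial>disorder D)"
proof -
  have "(\<integral>\<xi>. f \<xi> \<partial>disorder D) = (\<integral>\<xi>. f \<xi> \<partial>distr (disorder D) (disorder D) (shift_dis v))"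
    by (simp add: distr_disorder_shift assms(1))
  also have "\<dots> = (\<integral>\<xi>. f (shift_dis v \<xi>) \<partial>disorder D)"
    by (rule integral_distr[OF measurable_shift_dis assms(2)])
  finally show ?thesis
    by simp
qed

lemma AE_disorder_shift:
  assumes "prob_space D" and "AE \<xi> in disorder D. P \<xi>"
  shows "AE \<xi> in disorder D. P (shift_dis v \<xi>)"
proof (rule AE_distrD[OF measurable_shift_dis])
  show "AE \<xi> in distr (disorder D) (disorder D) (shift_dis v). P \<xi>"
    using assms(2) by (simp only: distr_disorder_shift[OF assms(1)])
qed

lemma shift_grad_neighbour:
  "y \<in> origin_nbrs \<Longrightarrow> shift_grad y \<eta> (origin, y) = \<eta> (neg_site y, origin)"
  using origin_bond[of y] by (simp add: shift_grad_def vsub_def origin_def neg_site_def)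

section \<open>Gradient Gibbs measures and the force on the origin\<close>

context potential
begin

lemma Ham_origin:
  "Ham V \<xi> {origin} \<psi> \<phi> = single_energy origin_nbrs \<psi> (\<xi> origin / 2) (\<phi> origin)"
proof -
  have inner: "{(x, y). x \<in> {origin} \<and> y \<in> {origin} \<and> adj x y} = {}"
    by (auto simp: not_adj_self)
  have outer: "{(x, y). x \<in> {origin} \<and> y \<in> boundary {origin} \<and> adj x y} = Pair origin ` origin_nbrs"
    by (auto simp: boundary_origin origin_nbrs_def)
  show ?thesis
    unfolding Ham_def single_energy_def inner outer by (subst sum.reindex) (auto simp: inj_on_def)
qed

lemma mu_fin_origin:
  fixes \<xi> :: "('d::finite) site \<Rightarrow> real"
  shows "mu_fin V \<xi> {origin} \<rho> = distr (density lborel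
      (\<lambda>t. ennreal (single_density origin_nbrs (psi_of \<rho>) (\<xi> origin / 2) t))) chi_M
      (grad_set_origin (psi_of \<rho>))"
proof -
  let ?P = "PiM {origin} (\<lambda>_. lborel) :: ('d site \<Rightarrow> real) measure"
  let ?f = "single_density origin_nbrs (psi_of \<rho>) (\<xi> origin / 2)"
  have proj: "(\<lambda>\<phi>. \<phi> origin) \<in> measurable ?P lborel"
    by (simp add: measurable_component_singleton)
  have "partition_fn V \<xi> {origin} (psi_of \<rho>)
      = (\<integral>t. exp (- single_energy origin_nbrs (psi_of \<rho>) (\<xi> origin / 2) t) \<partial>lborel)"
    unfolding partition_fn_def Ham_origin by (rule integral_PiM_singleton_lborel) simp
  then have "nu_fin V \<xi> {origin} (psi_of \<rho>) = density ?P (\<lambda>\<phi>. ennreal (?f (\<phi> origin)))"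
    by (simp add: nu_fin_def Ham_origin single_density_def)
  moreover have "(\<lambda>\<phi>. grad (ext_cfg {origin} \<phi> (psi_of \<rho>))) = grad_set_origin (psi_of \<rho>) \<circ> (\<lambda>\<phi>. \<phi> origin)"
  proof -
    have ext_cfg_origin: "ext_cfg {origin} \<phi> \<psi> = (\<lambda>x. if x = origin then \<phi> origin else \<psi> x)"
      for \<phi> \<psi> :: "'d site \<Rightarrow> real"
      by (auto simp: ext_cfg_def)
    show ?thesis
      unfolding ext_cfg_origin by (simp add: grad_set_origin_def o_def)
  qed
  ultimately have "mu_fin V \<xi> {origin} \<rho>
      = distr (distr (density ?P (\<lambda>\<phi>. ennreal (?f (\<phi> origin)))) lborel (\<lambda>\<phi>. \<phi> origin)) chi_M
          (grad_set_origin (psi_of \<rho>))"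
    using proj by (simp add: mu_fin_def distr_distr cong: measurable_cong_sets)
  also have "\<dots> = distr (density lborel (\<lambda>t. ennreal (?f t))) chi_M (grad_set_origin (psi_of \<rho>))"
    using density_distr[of "\<lambda>t. ennreal (?f t)" lborel "\<lambda>\<phi>. \<phi> origin" ?P] proj
    by (simp add: distr_PiM_singleton_lborel)
  finally show ?thesis .
qed

lemma sets_mu_fin: "sets (mu_fin V \<xi> \<Lambda> \<rho>) = sets chi_M"
  by (simp add: mu_fin_def)

lemma prob_space_mu_fin_origin: "prob_space (mu_fin V \<xi> {origin} \<rho>)"
  unfolding mu_fin_origin
  using prob_space_density_single_density[OF finite_origin_nbrs origin_nbrs_nonempty]
  by (rule prob_space.prob_space_distr) simp

lemma
  fixes \<xi> :: "('d::finite) site \<Rightarrow> real"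
  assumes "F \<in> borel_measurable chi_M"
  shows integral_mu_fin_origin: "(\<integral>\<eta>. F \<eta> \<partial>mu_fin V \<xi> {origin} \<rho>)
      = (\<integral>t. single_density origin_nbrs (psi_of \<rho>) (\<xi> origin / 2) t * F (grad_set_origin (psi_of \<rho>) t) \<partial>lborel)"
    and integrable_mu_fin_origin: "integrable (mu_fin V \<xi> {origin} \<rho>) F
      \<longleftrightarrow> integrable lborel (\<lambda>t. single_density origin_nbrs (psi_of \<rho>) (\<xi> origin / 2) t * F (grad_set_origin (psi_of \<rho>) t))"
proof -
  let ?g = "single_density origin_nbrs (psi_of \<rho>) (\<xi> origin / 2)"
  have F: "(\<lambda>t. F (grad_set_origin (psi_of \<rho>) t)) \<in> borel_measurable lborel"
    using measurable_compose[OF grad_set_origin_measurable assms] by simp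
  have g: "?g \<in> borel_measurable lborel" "AE t in lborel. 0 \<le> ?g t"
    by (simp_all add: single_density_nonneg finite_origin_nbrs origin_nbrs_nonempty)
  have "(\<integral>\<eta>. F \<eta> \<partial>mu_fin V \<xi> {origin} \<rho>)
      = (\<integral>t. F (grad_set_origin (psi_of \<rho>) t) \<partial>density lborel (\<lambda>t. ennreal (?g t)))"
    unfolding mu_fin_origin using assms by (intro integral_distr) simp_all
  also have "\<dots> = (\<integral>t. ?g t * F (grad_set_origin (psi_of \<rho>) t) \<partial>lborel)"
    using integral_density[OF F g] by simp
  finally show "(\<integral>\<eta>. F \<eta> \<partial>mu_fin V \<xi> {origin} \<rho>)
      = (\<integral>t. ?g t * F (grad_set_origin (psi_of \<rho>) t) \<partial>lborel)" .
  have "integrable (mu_fin V \<xi> {origin} \<rho>) F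
      \<longleftrightarrow> integrable (density lborel (\<lambda>t. ennreal (?g t))) (\<lambda>t. F (grad_set_origin (psi_of \<rho>) t))"
    unfolding mu_fin_origin using assms by (intro integrable_distr_eq) simp_all
  also have "\<dots> \<longleftrightarrow> integrable lborel (\<lambda>t. ?g t * F (grad_set_origin (psi_of \<rho>) t))"
    using integrable_density[OF F g] by simp
  finally show "integrable (mu_fin V \<xi> {origin} \<rho>) F
      \<longleftrightarrow> integrable lborel (\<lambda>t. ?g t * F (grad_set_origin (psi_of \<rho>) t))" .
qed

definition origin_force :: "(('d::finite) bond \<Rightarrow> real) \<Rightarrow> real" where
  "origin_force \<eta> = (\<Sum>y\<in>origin_nbrs. V' (\<eta> (origin, y)))"

lemma origin_force_measurable[measurable]: "origin_force \<in> borel_measurable chi_M"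
  unfolding origin_force_def
  by (intro borel_measurable_sum measurable_compose[OF measurable_bond_coordinate V'_measurable]
      origin_bond)

lemma continuous_on_origin_force: "continuous_on UNIV origin_force"
  unfolding origin_force_def
  by (intro continuous_on_sum continuous_on_compose2[OF continuous_on_V']) auto

lemma origin_force_grad_set_origin:
  "origin_force (grad_set_origin \<psi> t) = single_force origin_nbrs \<psi> t"
  unfolding origin_force_def single_force_def grad_set_origin_def
  by (intro sum.cong refl) (auto simp: grad_bond origin_bond origin_nbrs_def not_adj_self)

lemma integrable_mu_fin_origin_force:
  assumes "\<Phi> \<in> borel_measurable borel" and "\<And>x. \<bar>\<Phi> x\<bar> \<le> 1 + \<bar>x\<bar>"
  shows "integrable (mu_fin V \<xi> {origin} \<rho>) (\<lambda>\<eta>. \<Phi> (origin_force \<eta>))"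
  using assms
  by (simp add: integrable_mu_fin_origin origin_force_grad_set_origin
      integrable_single_density finite_origin_nbrs origin_nbrs_nonempty)

lemma integral_mu_fin_origin_force:
  "(\<integral>\<eta>. origin_force \<eta> \<partial>mu_fin V \<xi> {origin} \<rho>) = \<xi> origin / 2"
  by (simp add: integral_mu_fin_origin origin_force_grad_set_origin
      integral_single_density_force finite_origin_nbrs origin_nbrs_nonempty)

lemma gibbs_dlr_origin:
  "gradient_Gibbs V \<xi> \<mu> \<Longrightarrow> F \<in> Cb
    \<Longrightarrow> (\<integral>\<rho>. (\<integral>\<eta>. F \<eta> \<partial>mu_fin V \<xi> {origin} \<rho>) \<partial>\<mu>) = (\<integral>\<eta>. F \<eta> \<partial>\<mu>)"
  unfolding gradient_Gibbs_def by blast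

text \<open>The DLR equation only equates two numbers.  Integrability of the inner integral follows by
  shifting \<open>F\<close> to a function \<open>\<ge> 1\<close>: the right-hand side becomes nonzero, whereas a
  non-integrable left-hand side would have integral \<open>0\<close>.\<close>

lemma integrable_gibbs_inner_Cb:
  assumes G: "gradient_Gibbs V \<xi> \<mu>" and F: "F \<in> Cb"
  shows "integrable \<mu> (\<lambda>\<rho>. \<integral>\<eta>. F \<eta> \<partial>mu_fin V \<xi> {origin} \<rho>)"
proof -
  interpret \<mu>: prob_space \<mu>
    using G by (simp add: gradient_Gibbs_def)
  have sets_\<mu>: "sets \<mu> = sets chi_M"
    using G by (simp add: gradient_Gibbs_def)
  obtain K where K: "\<And>\<eta>. \<eta> \<in> chi \<Longrightarrow> \<bar>F \<eta>\<bar> \<le> K"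
    using F by (auto simp: Cb_def bounded_iff)
  have F_meas: "F \<in> borel_measurable chi_M"
    using F by (simp add: Cb_def)
  define F' where "F' \<eta> = F \<eta> + (K + 1)" for \<eta>
  have F'_bound: "\<bar>F' \<eta>\<bar> \<le> 2 * K + 1" "1 \<le> F' \<eta>" if "\<eta> \<in> chi" for \<eta>
    using K[OF that] by (auto simp: F'_def)
  have F'_meas: "F' \<in> borel_measurable chi_M"
    using F_meas unfolding F'_def[abs_def] by measurable
  have "F' \<in> Cb"
    unfolding Cb_def
  proof (intro CollectI conjI F'_meas)
    show "continuous_on chi F'"
      using F unfolding F'_def[abs_def] Cb_def by (auto intro: continuous_on_add continuous_on_const)
    show "bounded (F' ` chi)"
      using F'_bound(1) by (intro boundedI[of _ "2 * K + 1"]) auto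
  qed
  have inner: "(\<integral>\<eta>. F' \<eta> \<partial>mu_fin V \<xi> {origin} \<rho>) = (\<integral>\<eta>. F \<eta> \<partial>mu_fin V \<xi> {origin} \<rho>) + (K + 1)"
    for \<rho>
  proof -
    interpret k: prob_space "mu_fin V \<xi> {origin} \<rho>"
      by (rule prob_space_mu_fin_origin)
    have "integrable (mu_fin V \<xi> {origin} \<rho>) F"
      by (rule integrable_bounded_on_chi[OF k.finite_measure sets_mu_fin F_meas K])
    then show ?thesis
      by (simp add: F'_def k.prob_space)
  qed
  have "1 \<le> (\<integral>\<eta>. F' \<eta> \<partial>\<mu>)"
  proof (rule \<mu>.integral_ge_const)
    show "integrable \<mu> F'"
      by (rule integrable_bounded_on_chi[OF \<mu>.finite_measure sets_\<mu> F'_meas F'_bound(1)])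
    show "AE \<eta> in \<mu>. 1 \<le> F' \<eta>"
      using F'_bound(2) sets_eq_imp_space_eq[OF sets_\<mu>] by (intro AE_I2) (simp add: space_chi_M)
  qed
  then have "(\<integral>\<rho>. (\<integral>\<eta>. F' \<eta> \<partial>mu_fin V \<xi> {origin} \<rho>) \<partial>\<mu>) \<noteq> 0"
    using gibbs_dlr_origin[OF G \<open>F' \<in> Cb\<close>] by simp
  then have "integrable \<mu> (\<lambda>\<rho>. \<integral>\<eta>. F' \<eta> \<partial>mu_fin V \<xi> {origin} \<rho>)"
    using not_integrable_integral_eq by blast
  then have "integrable \<mu> (\<lambda>\<rho>. (\<integral>\<eta>. F' \<eta> \<partial>mu_fin V \<xi> {origin} \<rho>) - (K + 1))"
    by simp
  then show ?thesis
    by (simp add: inner)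
qed

lemma gibbs_identity_nonneg_origin_force:
  assumes G: "gradient_Gibbs V \<xi> \<mu>"
    and \<Psi>: "continuous_on UNIV \<Psi>" "\<And>x. 0 \<le> \<Psi> x" "\<And>x. \<Psi> x \<le> \<bar>x\<bar>"
    and integrable: "integrable \<mu> (\<lambda>\<eta>. \<Psi> (origin_force \<eta>))"
  shows "integrable \<mu> (\<lambda>\<rho>. \<integral>\<eta>. \<Psi> (origin_force \<eta>) \<partial>mu_fin V \<xi> {origin} \<rho>)"
    and "(\<integral>\<rho>. (\<integral>\<eta>. \<Psi> (origin_force \<eta>) \<partial>mu_fin V \<xi> {origin} \<rho>) \<partial>\<mu>)
      = (\<integral>\<eta>. \<Psi> (origin_force \<eta>) \<partial>\<mu>)"
proof -
  have trunc_Cb: "(\<lambda>\<eta>. cutoff (real n) (\<Psi> (origin_force \<eta>))) \<in> Cb" for n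
    using comp_in_Cb[OF origin_force_measurable continuous_on_origin_force
        continuous_on_compose2[OF continuous_on_cutoff \<Psi>(1)] abs_cutoff_le[OF of_nat_0_le_iff]]
    by simp
  have "\<bar>\<Psi> x\<bar> \<le> 1 + \<bar>x\<bar>" for x
    using \<Psi>(2,3)[of x] by simp
  then have "integrable (mu_fin V \<xi> {origin} \<rho>) (\<lambda>\<eta>. \<Psi> (origin_force \<eta>))" for \<rho>
    using \<Psi>(1) by (intro integrable_mu_fin_origin_force borel_measurable_continuous_onI)
  moreover have "(\<integral>\<rho>. (\<integral>\<eta>. cutoff (real n) (\<Psi> (origin_force \<eta>)) \<partial>mu_fin V \<xi> {origin} \<rho>) \<partial>\<mu>)
      = (\<integral>\<eta>. cutoff (real n) (\<Psi> (origin_force \<eta>)) \<partial>\<mu>)" for n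
    using gibbs_dlr_origin[OF G trunc_Cb] .
  ultimately show "integrable \<mu> (\<lambda>\<rho>. \<integral>\<eta>. \<Psi> (origin_force \<eta>) \<partial>mu_fin V \<xi> {origin} \<rho>)"
    and "(\<integral>\<rho>. (\<integral>\<eta>. \<Psi> (origin_force \<eta>) \<partial>mu_fin V \<xi> {origin} \<rho>) \<partial>\<mu>)
      = (\<integral>\<eta>. \<Psi> (origin_force \<eta>) \<partial>\<mu>)"
    using kernel_identity_monotone_limit[OF \<Psi>(2) integrable _ integrable_gibbs_inner_Cb[OF G trunc_Cb]]
    by blast+
qed

lemma integral_origin_force_gibbs:
  assumes G: "gradient_Gibbs V \<xi> \<mu>" and integrable: "integrable \<mu> origin_force"
  shows "(\<integral>\<eta>. origin_force \<eta> \<partial>\<mu>) = \<xi> origin / 2"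
proof -
  interpret \<mu>: prob_space \<mu>
    using G by (simp add: gradient_Gibbs_def)
  let ?k = "mu_fin V \<xi> {origin}"
  have cont: "continuous_on UNIV (\<lambda>x::real. max x 0)" "continuous_on UNIV (\<lambda>x::real. max (- x) 0)"
    by (intro continuous_intros)+
  have nonneg: "0 \<le> max x 0" "0 \<le> max (- x) 0" for x :: real
    by simp_all
  have le_abs: "max x 0 \<le> \<bar>x\<bar>" "max (- x) 0 \<le> \<bar>x\<bar>" for x :: real
    by auto
  have integrable_parts: "integrable \<mu> (\<lambda>\<eta>. max (origin_force \<eta>) 0)"
    "integrable \<mu> (\<lambda>\<eta>. max (- origin_force \<eta>) 0)"
    using integrable by (auto intro!: integrable_max)
  note pos_part = gibbs_identity_nonneg_origin_force[OF G cont(1) nonneg(1) le_abs(1) this(1)]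
    and neg_part = gibbs_identity_nonneg_origin_force[OF G cont(2) nonneg(2) le_abs(2) this(2)]
  have split: "max x 0 - max (- x) 0 = x" for x :: real
    by simp
  have inner: "(\<integral>\<eta>. max (origin_force \<eta>) 0 \<partial>?k \<rho>) - (\<integral>\<eta>. max (- origin_force \<eta>) 0 \<partial>?k \<rho>)
      = \<xi> origin / 2" for \<rho>
  proof -
    have "integrable (?k \<rho>) (\<lambda>\<eta>. max (origin_force \<eta>) 0)"
      "integrable (?k \<rho>) (\<lambda>\<eta>. max (- origin_force \<eta>) 0)"
      by (auto intro!: integrable_mu_fin_origin_force)
    then have "(\<integral>\<eta>. max (origin_force \<eta>) 0 \<partial>?k \<rho>) - (\<integral>\<eta>. max (- origin_force \<eta>) 0 \<partial>?k \<rho>)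
        = (\<integral>\<eta>. origin_force \<eta> \<partial>?k \<rho>)"
      by (simp add: split flip: Bochner_Integration.integral_diff)
    then show ?thesis
      by (simp add: integral_mu_fin_origin_force)
  qed
  have "(\<integral>\<eta>. origin_force \<eta> \<partial>\<mu>)
      = (\<integral>\<eta>. max (origin_force \<eta>) 0 \<partial>\<mu>) - (\<integral>\<eta>. max (- origin_force \<eta>) 0 \<partial>\<mu>)"
    using integrable_parts by (simp add: split flip: Bochner_Integration.integral_diff)
  also have "\<dots> = (\<integral>\<rho>. (\<integral>\<eta>. max (origin_force \<eta>) 0 \<partial>?k \<rho>)
      - (\<integral>\<eta>. max (- origin_force \<eta>) 0 \<partial>?k \<rho>) \<partial>\<mu>)"
    using pos_part neg_part by (simp add: Bochner_Integration.integral_diff)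
  finally have "(\<integral>\<eta>. origin_force \<eta> \<partial>\<mu>) = (\<integral>\<rho>. \<xi> origin / 2 \<partial>\<mu>)"
    by (simp only: inner)
  then show ?thesis
    by (simp add: inner \<mu>.prob_space)
qed

text \<open>Shifting by \<open>y\<close> moves the bond \<open>(0, y)\<close> to \<open>(-y, 0)\<close>, the reverse of \<open>(0, -y)\<close>.\<close>

lemma bond_force_shift_dis:
  fixes \<mu> :: "(('d::finite) site \<Rightarrow> real) \<Rightarrow> ('d bond \<Rightarrow> real) measure"
  assumes cov: "\<forall>F\<in>Cb. (\<integral>\<eta>. F \<eta> \<partial>\<mu> (shift_dis y \<xi>)) = (\<integral>\<eta>. F (shift_grad y \<eta>) \<partial>\<mu> \<xi>)"
    and sets: "sets (\<mu> \<xi>) = sets chi_M" and y: "y \<in> origin_nbrs"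
    and integrable_y: "integrable (\<mu> (shift_dis y \<xi>)) (\<lambda>\<eta>. V' (\<eta> (origin, y)))"
    and integrable_neg_y: "integrable (\<mu> \<xi>) (\<lambda>\<eta>. V' (\<eta> (origin, neg_site y)))"
  shows "(\<integral>\<eta>. V' (\<eta> (origin, y)) \<partial>\<mu> (shift_dis y \<xi>))
    = - (\<integral>\<eta>. V' (\<eta> (origin, neg_site y)) \<partial>\<mu> \<xi>)"
proof -
  have bond: "(origin, y) \<in> bonds" "(origin, neg_site y) \<in> bonds"
    using origin_bond[OF y] origin_bond[OF neg_site_in_origin_nbrs[OF y]] by simp_all
  have odd: "V' (\<eta> (neg_site y, origin)) = - V' (\<eta> (origin, neg_site y))" if "\<eta> \<in> space (\<mu> \<xi>)" for \<eta>
    using that chi_antisym[OF _ bond(2), of \<eta>] sets_eq_imp_space_eq[OF sets]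
    by (simp add: space_chi_M V'_minus)
  have "integrable (\<mu> \<xi>) (\<lambda>\<eta>. V' (\<eta> (neg_site y, origin)))
      \<longleftrightarrow> integrable (\<mu> \<xi>) (\<lambda>\<eta>. - V' (\<eta> (origin, neg_site y)))"
    by (rule Bochner_Integration.integrable_cong) (simp_all add: odd)
  then have integrable_back: "integrable (\<mu> \<xi>) (\<lambda>\<eta>. V' (\<eta> (neg_site y, origin)))"
    using integrable_neg_y by simp
  have cutoff_Cb: "(\<lambda>\<eta>. cutoff (real n) (V' (\<eta> (origin, y)))) \<in> Cb" for n
  proof (rule comp_in_Cb[OF measurable_bond_coordinate[OF bond(1)]])
    show "continuous_on UNIV (\<lambda>\<eta>::'d bond \<Rightarrow> real. \<eta> (origin, y))"
      by (rule continuous_on_product_coordinates)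
    show "continuous_on UNIV (\<lambda>x. cutoff (real n) (V' x))"
      by (rule continuous_on_compose2[OF continuous_on_cutoff continuous_on_V' subset_UNIV])
  qed (rule abs_cutoff_le[OF of_nat_0_le_iff])
  have "(\<integral>\<eta>. cutoff (real n) (V' (\<eta> (origin, y))) \<partial>\<mu> (shift_dis y \<xi>))
      = (\<integral>\<eta>. cutoff (real n) (V' (\<eta> (neg_site y, origin))) \<partial>\<mu> \<xi>)" for n
    using cov[rule_format, OF cutoff_Cb[of n]] by (simp only: shift_grad_neighbour[OF y])
  then have "(\<integral>\<eta>. V' (\<eta> (origin, y)) \<partial>\<mu> (shift_dis y \<xi>)) = (\<integral>\<eta>. V' (\<eta> (neg_site y, origin)) \<partial>\<mu> \<xi>)"
    by (rule integral_eq_if_integral_cutoff_eq[OF integrable_y integrable_back])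
  also have "\<dots> = (\<integral>\<eta>. - V' (\<eta> (origin, neg_site y)) \<partial>\<mu> \<xi>)"
    by (rule Bochner_Integration.integral_cong) (simp_all add: odd)
  finally show ?thesis
    by simp
qed

lemma expected_origin_force:
  fixes \<mu> :: "(('d::finite) site \<Rightarrow> real) \<Rightarrow> ('d bond \<Rightarrow> real) measure"
  assumes D: "prob_space D" "sets D = sets borel"
    and gibbs: "AE \<xi> in disorder D. gradient_Gibbs V \<xi> (\<mu> \<xi>)"
    and bond_integrable: "\<And>y. y \<in> origin_nbrs \<Longrightarrow>
      AE \<xi> in disorder D. integrable (\<mu> \<xi>) (\<lambda>\<eta>. V' (\<eta> (origin, y)))"
    and mean_integrable: "\<And>y. y \<in> origin_nbrs \<Longrightarrow>
      integrable (disorder D) (\<lambda>\<xi>. \<integral>\<eta>. V' (\<eta> (origin, y)) \<partial>\<mu> \<xi>)"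
  shows "(\<Sum>y\<in>origin_nbrs. \<integral>\<xi>. (\<integral>\<eta>. V' (\<eta> (origin, y)) \<partial>\<mu> \<xi>) \<partial>disorder D) = (\<integral>t. t \<partial>D) / 2"
proof -
  have ae: "AE \<xi> in disorder D. (\<Sum>y\<in>origin_nbrs. \<integral>\<eta>. V' (\<eta> (origin, y)) \<partial>\<mu> \<xi>) = \<xi> origin / 2"
  proof -
    have "AE \<xi> in disorder D. \<forall>y\<in>origin_nbrs. integrable (\<mu> \<xi>) (\<lambda>\<eta>. V' (\<eta> (origin, y)))"
      by (intro AE_finite_allI finite_origin_nbrs bond_integrable)
    with gibbs show ?thesis
    proof eventually_elim
    case (elim \<xi>)
    then have "(\<Sum>y\<in>origin_nbrs. \<integral>\<eta>. V' (\<eta> (origin, y)) \<partial>\<mu> \<xi>) = (\<integral>\<eta>. origin_force \<eta> \<partial>\<mu> \<xi>)"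
      by (simp add: origin_force_def Bochner_Integration.integral_sum)
    also have "\<dots> = \<xi> origin / 2"
      using elim by (intro integral_origin_force_gibbs) (simp_all add: origin_force_def[abs_def])
    finally show ?case .
    qed
  qed
  have "(\<lambda>\<xi>. \<Sum>y\<in>origin_nbrs. \<integral>\<eta>. V' (\<eta> (origin, y)) \<partial>\<mu> \<xi>) \<in> borel_measurable (disorder D)"
    using mean_integrable by (intro borel_measurable_sum borel_measurable_integrable)
  moreover have "(\<lambda>\<xi>::'d site \<Rightarrow> real. \<xi> origin) \<in> borel_measurable (disorder D)"
    using measurable_component_singleton[of origin UNIV "\<lambda>_. D"] D(2)
    by (simp add: disorder_def cong: measurable_cong_sets)
  then have "(\<lambda>\<xi>::'d site \<Rightarrow> real. \<xi> origin / 2) \<in> borel_measurable (disorder D)"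
    by measurable
  ultimately have "(\<integral>\<xi>. (\<Sum>y\<in>origin_nbrs. \<integral>\<eta>. V' (\<eta> (origin, y)) \<partial>\<mu> \<xi>) \<partial>disorder D)
      = (\<integral>\<xi>. (\<xi>::'d site \<Rightarrow> real) origin / 2 \<partial>disorder D)"
    using ae by (rule integral_cong_AE)
  then show ?thesis
    using mean_integrable D by (simp add: Bochner_Integration.integral_sum integral_disorder_coordinate)
qed

lemma expected_bond_force_odd:
  fixes \<mu> :: "(('d::finite) site \<Rightarrow> real) \<Rightarrow> ('d bond \<Rightarrow> real) measure"
  assumes D: "prob_space D" "sets D = sets borel" and SC: "shift_cov_random_GGM V D \<mu>"
    and y: "y \<in> origin_nbrs"
    and bond_integrable: "\<And>y. y \<in> origin_nbrs \<Longrightarrow>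
      AE \<xi> in disorder D. integrable (\<mu> \<xi>) (\<lambda>\<eta>. V' (\<eta> (origin, y)))"
    and mean_integrable: "\<And>y. y \<in> origin_nbrs \<Longrightarrow>
      integrable (disorder D) (\<lambda>\<xi>. \<integral>\<eta>. V' (\<eta> (origin, y)) \<partial>\<mu> \<xi>)"
  shows "(\<integral>\<xi>. (\<integral>\<eta>. V' (\<eta> (origin, neg_site y)) \<partial>\<mu> \<xi>) \<partial>disorder D)
    = - (\<integral>\<xi>. (\<integral>\<eta>. V' (\<eta> (origin, y)) \<partial>\<mu> \<xi>) \<partial>disorder D)"
proof -
  define m where "m z \<xi> = (\<integral>\<eta>. V' (\<eta> (origin, z)) \<partial>\<mu> \<xi>)" for z \<xi>
  have space: "space (disorder D) = UNIV"
    using sets_eq_imp_space_eq[OF D(2)] by (simp add: disorder_def space_PiM)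
  have sets: "sets (\<mu> \<xi>) = sets chi_M" for \<xi>
    using SC measurable_space[of \<mu> "disorder D" "prob_algebra chi_M" \<xi>]
    by (simp add: shift_cov_random_GGM_def space space_prob_algebra)
  have cov: "\<forall>F\<in>Cb. (\<integral>\<eta>. F \<eta> \<partial>\<mu> (shift_dis y \<xi>)) = (\<integral>\<eta>. F (shift_grad y \<eta>) \<partial>\<mu> \<xi>)" for \<xi>
    using SC by (simp add: shift_cov_random_GGM_def space)
  have neg_y: "neg_site y \<in> origin_nbrs"
    using y by (rule neg_site_in_origin_nbrs)
  have m_measurable: "m z \<in> borel_measurable (disorder D)" if "z \<in> origin_nbrs" for z
    unfolding m_def using mean_integrable[OF that] by (rule borel_measurable_integrable)
  have "(\<integral>\<xi>. m y \<xi> \<partial>disorder D) = (\<integral>\<xi>. m y (shift_dis y \<xi>) \<partial>disorder D)"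
    using integral_disorder_shift[OF D(1) m_measurable[OF y]] by simp
  also have "\<dots> = (\<integral>\<xi>. - m (neg_site y) \<xi> \<partial>disorder D)"
  proof (rule integral_cong_AE)
    show "(\<lambda>\<xi>. m y (shift_dis y \<xi>)) \<in> borel_measurable (disorder D)"
      by (rule measurable_compose[OF measurable_shift_dis m_measurable[OF y]])
    show "(\<lambda>\<xi>. - m (neg_site y) \<xi>) \<in> borel_measurable (disorder D)"
      using m_measurable[OF neg_y] by simp
    show "AE \<xi> in disorder D. m y (shift_dis y \<xi>) = - m (neg_site y) \<xi>"
      using AE_disorder_shift[OF D(1) bond_integrable[OF y], where v=y] bond_integrable[OF neg_y]
    proof eventually_elim
      case (elim \<xi>)
      then show ?case
        using bond_force_shift_dis[OF cov[of \<xi>] sets[of \<xi>] y] by (simp add: m_def)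
    qed
  qed
  finally show ?thesis
    by (simp add: m_def)
qed

end

theorem theorem1p2:
  fixes V V' V'' :: "real \<Rightarrow> real" and A B C2 :: real and D :: "real measure"
  assumes d3: "CARD('d::finite) \<ge> 3"
    and V_even: "\<forall>s. V (- s) = V s"
    and V_d1: "\<forall>s. (V has_real_derivative V' s) (at s)"
    and V_d2: "\<forall>s. (V' has_real_derivative V'' s) (at s)"
    and V_C2: "continuous_on UNIV V''"
    and A_pos: "A > 0"
    and V_lower: "\<forall>s. V s \<ge> A * s^2 - B"
    and C2_pos: "C2 > 0"
    and V_upper: "\<forall>s. V'' s \<le> C2"
    and D_prob: "prob_space D"
    and D_sets: "sets D = sets borel"
    and D_2mom: "integrable D (\<lambda>x. x^2)"
    and D_2mom_nz: "(\<integral>x. x^2 \<partial>D) \<noteq> 0"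
    and D_mean: "(\<integral>x. x \<partial>D) \<noteq> 0"
  shows "\<not> (\<exists>\<mu> :: ('d site \<Rightarrow> real) \<Rightarrow> ('d bond \<Rightarrow> real) measure.
           shift_cov_random_GGM V D \<mu> \<and>
           (\<forall>b\<in>(bonds :: 'd bond set).
              (AE \<xi> in disorder D. integrable (\<mu> \<xi>) (\<lambda>\<eta>. V' (\<eta> b))) \<and>
              integrable (disorder D) (\<lambda>\<xi>. \<integral>\<eta>. V' (\<eta> b) \<partial>\<mu> \<xi>)))"
proof
  interpret potential V V' V'' A B C2
    using V_even V_d1 V_d2 A_pos V_lower V_upper C2_pos by unfold_locales auto
  assume "\<exists>\<mu> :: ('d site \<Rightarrow> real) \<Rightarrow> ('d bond \<Rightarrow> real) measure. shift_cov_random_GGM V D \<mu> \<and>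
    (\<forall>b\<in>bonds. (AE \<xi> in disorder D. integrable (\<mu> \<xi>) (\<lambda>\<eta>. V' (\<eta> b))) \<and>
      integrable (disorder D) (\<lambda>\<xi>. \<integral>\<eta>. V' (\<eta> b) \<partial>\<mu> \<xi>))"
  then obtain \<mu> :: "('d site \<Rightarrow> real) \<Rightarrow> ('d bond \<Rightarrow> real) measure"
    where SC: "shift_cov_random_GGM V D \<mu>"
      and bond_integrable: "\<And>y. y \<in> origin_nbrs \<Longrightarrow>
        AE \<xi> in disorder D. integrable (\<mu> \<xi>) (\<lambda>\<eta>. V' (\<eta> (origin, y)))"
      and mean_integrable: "\<And>y. y \<in> origin_nbrs \<Longrightarrow>
        integrable (disorder D) (\<lambda>\<xi>. \<integral>\<eta>. V' (\<eta> (origin, y)) \<partial>\<mu> \<xi>)"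
    using origin_bond by blast
  define m where "m y = (\<integral>\<xi>. (\<integral>\<eta>. V' (\<eta> (origin, y)) \<partial>\<mu> \<xi>) \<partial>disorder D)" for y
  have "(\<Sum>y\<in>origin_nbrs. m y) = (\<integral>x. x \<partial>D) / 2"
    unfolding m_def using SC D_prob D_sets bond_integrable mean_integrable
    by (intro expected_origin_force) (simp_all add: shift_cov_random_GGM_def)
  moreover have "m (neg_site y) = - m y" if "y \<in> origin_nbrs" for y
    unfolding m_def
    by (rule expected_bond_force_odd[OF D_prob D_sets SC that])
      (simp_all add: bond_integrable mean_integrable)
  then have "(\<Sum>y\<in>origin_nbrs. m y) = 0"
    by (rule sum_eq_zero_if_odd[OF bij_betw_neg_site])
  ultimately show False
    using D_mean by simp
qed

end
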